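(* Let $d\ge 2$, $m=2^d$, let $r\ge 2$, $t=\lceil \log_2 r\rceil$, let $c\in\{0,\dots,r-1\}^m$ and $\ell\in\{0,\dots,r-1\}$. Let $\mathrm{Ind}\in\{0,1\}^m$ be given by $\mathrm{Ind}(i)=1$ if $c(i)=\ell$ and $\mathrm{Ind}(i)=0$ otherwise. For each prime $p\in \mathrm{Primes}_{m,d}$ let $b_p=\mathrm{SPiRiT}_p(\mathrm{Ind})\in\{0,\dots,p-1\}^d$, and let $i_p=1+\sum_{h=1}^d b_p(h)\,2^{h-1}$ (with the entries of $b_p$ read as integers in $\{0,\dots,p-1\}$). Let $C=\{i_p: p\in\mathrm{Primes}_{m,d}\}\cap[m]$, and let $i^\dagger=\min\{i\in C: c(i)=\ell\}$ (with $i^\dagger=0$ if this set is empty). Then $$i^\dagger=\min\{i\in[m]: c(i)=\ell\}$$ (where the minimum of the empty set is $0$). Moreover: $|\mathrm{Primes}_{m,d}|=O(\log^2 m/\log\log m)$; there is an absolute constant $K$ such that every $p\in\mathrm{Primes}_{m,d}$ satisfies $p\le K\log_2^2 m$; and, writing each entry of $c$ and $\ell$ by its $t$-bit binary representation, each coordinate of $b_p$ equals, as a function of these $(m+1)t$ bits (viewed as elements of $\mathbb Z_p$), a polynomial over $\mathbb Z_p$ of degree at most $2t(p-1)^2=O(\log^4 m\,\log r)$.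
   Context: Logarithms are base 2 unless stated. $[m]=\{1,\dots,m\}$. Let $m=2^d$. Consider the complete binary tree with nodes indexed $1,\dots,2m-1$: node $1$ is the root, node $k\in[m-1]$ has left child $2k$ and right child $2k+1$; nodes $m,\dots,2m-1$ are leaves, and leaf number $i\in[m]$ is node $m+i-1$. For $i\in[m]$ let $\mathrm{Anc}(i)=\{\lfloor (m+i-1)/2^h\rfloor: h=0,\dots,d\}$ (the ancestors of leaf $i$, including the leaf itself and the root), and $\mathrm{Lop}(i)=\{k-1: k\in \mathrm{Anc}(i),\ k\text{ odd},\ k\ge 3\}$ (the left siblings of those nodes of $\mathrm{Anc}(i)$ that are right children). Tree matrix $T\in\{0,1\}^{(2m-1)\times m}$: $T(k,i)=1$ iff $k\in\mathrm{Anc}(i)$. Roots matrix $R\in\{0,1\}^{m\times(2m-1)}$: for $j\in[m-1]$, $R(j,k)=1$ iff $k\in\mathrm{Lop}(j+1)$; row $m$ of $R$ is the indicator vector of $\{1\}$. Pairwise matrix $P\in\{-1,0,1\}^{m\times m}$: $(Pu)(1)=u(1)$ and $(Pu)(k)=u(k)-u(k-1)$ for $k\ge 2$. Sketch matrix $S\in\{0,1\}^{d\times m}$: $S(h,k)$ is the $h$-th bit (the coefficient of $2^{h-1}$) of $k-1$. For a prime $p$ and an integer vector $y$, $i_p(y)$ is the vector with entries $y(k)^{p-1}\bmod p$, and $\mathrm{SPiRiT}_p(x)=\big(SP\cdot i_p\big((R\cdot i_p(Tx\bmod p))\bmod p\big)\big)\bmod p$. For integers $m\ge 4$ and $s\ge1$,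 with $b=\lceil\log_2 m\rceil$, $\mathrm{Primes}_{m,s}$ is the set of the $N=1+\lfloor \lceil s\rceil\log_b m\rfloor$ smallest primes that are larger than $b$. *)

theory Defs
  imports Complex_Main "HOL-Computational_Algebra.Primes" "HOL-Library.Landau_Symbols"
begin

(* Vectors are functions nat => int, indexed from 1; m = 2^d. *)

definition Anc :: "nat \<Rightarrow> nat \<Rightarrow> nat set" where
  "Anc d i = {(2^d + i - 1) div 2^h | h. h \<le> d}"

definition Lop :: "nat \<Rightarrow> nat \<Rightarrow> nat set" where
  "Lop d i = {k - 1 | k. k \<in> Anc d i \<and> odd k \<and> k \<ge> 3}"

definition mat_vec :: "(nat \<Rightarrow> nat \<Rightarrow> int) \<Rightarrow> nat \<Rightarrow> (nat \<Rightarrow> int) \<Rightarrow> (nat \<Rightarrow> int)" where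
  "mat_vec A n x = (\<lambda>k. \<Sum>i=1..n. A k i * x i)"

definition tree_mat :: "nat \<Rightarrow> nat \<Rightarrow> nat \<Rightarrow> int" where
  "tree_mat d k i = (if k \<in> Anc d i then 1 else 0)"

definition roots_mat :: "nat \<Rightarrow> nat \<Rightarrow> nat \<Rightarrow> int" where
  "roots_mat d j k =
     (if 1 \<le> j \<and> j \<le> 2^d - 1 then (if k \<in> Lop d (j+1) then 1 else 0)
      else if j = 2^d then (if k = 1 then 1 else 0) else 0)"

definition pair_mat :: "nat \<Rightarrow> nat \<Rightarrow> int" where
  "pair_mat k i = (if i = k then 1 else if k \<ge> 2 \<and> i = k - 1 then -1 else 0)"

definition sketch_mat :: "nat \<Rightarrow> nat \<Rightarrow> int" where
  "sketch_mat h k = int (((k - 1) div 2^(h - 1)) mod 2)"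

definition ip :: "nat \<Rightarrow> (nat \<Rightarrow> int) \<Rightarrow> (nat \<Rightarrow> int)" where
  "ip p y = (\<lambda>k. (y k)^(p - 1) mod int p)"

definition vmod :: "(nat \<Rightarrow> int) \<Rightarrow> nat \<Rightarrow> (nat \<Rightarrow> int)" where
  "vmod y p = (\<lambda>k. y k mod int p)"

definition SPiRiT :: "nat \<Rightarrow> nat \<Rightarrow> (nat \<Rightarrow> int) \<Rightarrow> (nat \<Rightarrow> int)" where
  "SPiRiT d p x =
     vmod (mat_vec sketch_mat (2^d) (mat_vec pair_mat (2^d)
       (ip p (vmod (mat_vec (roots_mat d) (2 * 2^d - 1)
          (ip p (vmod (mat_vec (tree_mat d) (2^d) x) p))) p)))) p"

(* Primes_{m,s}: the N smallest primes larger than b = ceil(log2 m),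
   N = 1 + floor(ceil(s) * log_b m); here s is a natural number, so ceil(s) = s *)
definition Primes_ms :: "nat \<Rightarrow> nat \<Rightarrow> nat set" where
  "Primes_ms m s =
     (let b = nat \<lceil>log 2 (real m)\<rceil>;
          N = nat (1 + \<lfloor>real s * log (real b) (real m)\<rfloor>)
      in {p. prime p \<and> b < p \<and> card {q. prime q \<and> b < q \<and> q < p} < N})"

definition min0 :: "nat set \<Rightarrow> nat" where
  "min0 A = (if A = {} then 0 else Min A)"

definition monomials :: "nat \<Rightarrow> nat \<Rightarrow> (nat \<Rightarrow> nat) set" where
  "monomials n D = {e. (\<forall>j. n \<le> j \<longrightarrow> e j = 0) \<and> (\<Sum>j<n. e j) \<le> D}"

definition poly_eval :: "((nat \<Rightarrow> nat) \<Rightarrow> int) \<Rightarrow> nat \<Rightarrow> nat \<Rightarrow> (nat \<Rightarrow> int) \<Rightarrow> int" where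
  "poly_eval a n D z = (\<Sum>e\<in>monomials n D. a e * (\<Prod>j<n. z j ^ e j))"

(* the (m+1)t input bits: variable j*t+q (q<t) is bit q (coefficient of 2^q) of c(j+1) for j<m,
   and bit q of l for j = m *)
definition input_bits :: "nat \<Rightarrow> nat \<Rightarrow> (nat \<Rightarrow> nat) \<Rightarrow> nat \<Rightarrow> nat \<Rightarrow> int" where
  "input_bits m t c l j =
     (if j div t < m then int ((c (j div t + 1) div 2^(j mod t)) mod 2)
      else int ((l div 2^(j mod t)) mod 2))"

definition Ind :: "nat \<Rightarrow> (nat \<Rightarrow> nat) \<Rightarrow> nat \<Rightarrow> nat \<Rightarrow> int" where
  "Ind m c l = (\<lambda>i. if 1 \<le> i \<and> i \<le> m \<and> c i = l then 1 else 0)"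

definition b_vec :: "nat \<Rightarrow> nat \<Rightarrow> (nat \<Rightarrow> nat) \<Rightarrow> nat \<Rightarrow> (nat \<Rightarrow> int)" where
  "b_vec d p c l = SPiRiT d p (Ind (2^d) c l)"

definition idx :: "nat \<Rightarrow> nat \<Rightarrow> (nat \<Rightarrow> nat) \<Rightarrow> nat \<Rightarrow> nat" where
  "idx d p c l = 1 + (\<Sum>h=1..d. nat (b_vec d p c l h) * 2^(h - 1))"

end

theory Submission
  imports Defs "HOL-Number_Theory.Residues"
begin

(*
  Call a node of the tree good for p if p does not divide the number of matching leaves below it
  (the tree stage), and let s be the first matching leaf. If every node on the path to s is good,
  then, by Fermat, the first application of i_p marks that path with 1 and every node lying over
  leaves before s with 0. The roots of the dyadic decomposition of a prefix [1, j] meet the path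
  exactly when s <= j, and their sum has at most d < p terms, so the second application of i_p
  produces the step function [s <= j]; the pairwise matrix turns it into the point mass at s and
  the sketch matrix reads off the bits of s - 1.
  A prime p > d fails only if it divides the product of the d inner path counts, a number below
  2^(d^2); fewer than d^2 / log d primes above d can do so, hence one of the first
  1 + d^2 / log d of them succeeds. Chebyshev's bound via the central binomial coefficient puts
  all these primes below 128 d^2.
  For the degree bound, Ind is a product of t quadratic bit comparisons and each application of
  i_p multiplies the degree by p - 1, the linear maps leaving it unchanged.
*)

lemma finite_monomials: "finite (monomials n D)"
proof -
  let ?ext = "\<lambda>f j. if j < n then f j else (0::nat)"
  have "monomials n D \<subseteq> ?ext ` (PiE {..<n} (\<lambda>_. {..D}))"
  proof
    fix e assume e: "e \<in> monomials n D"
    have "e j \<le> D" if "j < n" for j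
      using e member_le_sum[of j "{..<n}" e] that unfolding monomials_def by auto
    then have "restrict e {..<n} \<in> PiE {..<n} (\<lambda>_. {..D})" by auto
    moreover have "e = ?ext (restrict e {..<n})"
      using e unfolding monomials_def by (auto simp: fun_eq_iff)
    ultimately show "e \<in> ?ext ` (PiE {..<n} (\<lambda>_. {..D}))" by blast
  qed
  then show ?thesis by (rule finite_subset) (intro finite_imageI finite_PiE; simp)
qed

lemma poly_eval_monomial:
  assumes "e \<in> monomials n D"
  shows "poly_eval (\<lambda>e'. if e' = e then k else 0) n D z = k * (\<Prod>j<n. z j ^ e j)"
proof -
  have "poly_eval (\<lambda>e'. if e' = e then k else 0) n D z
      = (\<Sum>e'\<in>monomials n D. if e' = e then k * (\<Prod>j<n. z j ^ e j) else 0)"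
    unfolding poly_eval_def by (rule sum.cong) auto
  also have "\<dots> = k * (\<Prod>j<n. z j ^ e j)"
    using assms by (simp add: sum.delta[OF finite_monomials])
  finally show ?thesis .
qed

lemma poly_eval_add:
  "poly_eval (\<lambda>e. a e + b e) n D z = poly_eval a n D z + poly_eval b n D z"
  unfolding poly_eval_def by (simp add: distrib_right sum.distrib)

lemma poly_eval_smult: "poly_eval (\<lambda>e. k * a e) n D z = k * poly_eval a n D z"
  unfolding poly_eval_def by (simp add: mult.assoc sum_distrib_left)

lemma poly_eval_mult:
  "\<exists>a. \<forall>z. poly_eval a1 n D1 z * poly_eval a2 n D2 z = poly_eval a n (D1 + D2) z"
proof -
  define M1 M2 M where "M1 = monomials n D1" and "M2 = monomials n D2"
    and "M = monomials n (D1 + D2)"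
  define plus where "plus = (\<lambda>(e1, e2) (j::nat). e1 j + e2 j :: nat)"
  define mono where "mono = (\<lambda>e (z::nat \<Rightarrow> int). \<Prod>j<n. z j ^ e j)"
  define a where "a = (\<lambda>e. \<Sum>q\<in>{q \<in> M1 \<times> M2. plus q = e}. a1 (fst q) * a2 (snd q))"
  have fin: "finite M1" "finite M2" "finite M"
    unfolding M1_def M2_def M_def by (auto intro: finite_monomials)
  have img: "plus ` (M1 \<times> M2) \<subseteq> M"
    unfolding M1_def M2_def M_def monomials_def plus_def by (auto simp: sum.distrib intro: add_mono)
  have mono_plus: "mono (plus q) z = mono (fst q) z * mono (snd q) z" for q z
    unfolding mono_def plus_def by (auto simp: power_add prod.distrib split: prod.splits)
  have "poly_eval a1 n D1 z * poly_eval a2 n D2 z = poly_eval a n (D1 + D2) z" for z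
  proof -
    have "poly_eval a1 n D1 z * poly_eval a2 n D2 z
        = (\<Sum>e1\<in>M1. \<Sum>e2\<in>M2. (a1 e1 * mono e1 z) * (a2 e2 * mono e2 z))"
      unfolding poly_eval_def M1_def M2_def mono_def by (simp add: sum_product)
    also have "\<dots> = (\<Sum>q\<in>M1 \<times> M2. a1 (fst q) * a2 (snd q) * mono (plus q) z)"
      by (simp add: sum.cartesian_product case_prod_beta mono_plus algebra_simps)
    also have "\<dots> = (\<Sum>e\<in>M. \<Sum>q\<in>{q \<in> M1 \<times> M2. plus q = e}. a1 (fst q) * a2 (snd q) * mono (plus q) z)"
      by (rule sum.group[OF finite_cartesian_product[OF fin(1,2)] fin(3) img, symmetric])
    also have "\<dots> = poly_eval a n (D1 + D2) z"
      unfolding poly_eval_def a_def M_def mono_def sum_distrib_right by (intro sum.cong refl) auto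
    finally show ?thesis .
  qed
  then show ?thesis by blast
qed

definition poly_mod_on ::
    "('x \<Rightarrow> nat \<Rightarrow> int) \<Rightarrow> 'x set \<Rightarrow> nat \<Rightarrow> nat \<Rightarrow> nat \<Rightarrow> ('x \<Rightarrow> int) \<Rightarrow> bool" where
  "poly_mod_on V A p n D f \<longleftrightarrow> (\<exists>a. \<forall>x\<in>A. f x mod int p = poly_eval a n D (V x) mod int p)"

lemma poly_mod_on_cong:
  assumes "poly_mod_on V A p n D g" "\<And>x. x \<in> A \<Longrightarrow> f x mod int p = g x mod int p"
  shows "poly_mod_on V A p n D f"
  using assms unfolding poly_mod_on_def by metis

lemma poly_mod_on_mod:
  "poly_mod_on V A p n D f \<Longrightarrow> poly_mod_on V A p n D (\<lambda>x. f x mod int p)"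
  by (erule poly_mod_on_cong) simp

lemma poly_mod_on_const: "poly_mod_on V A p n D (\<lambda>x. k)"
proof -
  have "(\<lambda>_. 0) \<in> monomials n D" unfolding monomials_def by simp
  then have "poly_eval (\<lambda>e'. if e' = (\<lambda>_. 0) then k else 0) n D z = k" for z
    by (simp add: poly_eval_monomial)
  then show ?thesis unfolding poly_mod_on_def by metis
qed

lemma poly_mod_on_var:
  assumes "j < n" "1 \<le> D"
  shows "poly_mod_on V A p n D (\<lambda>x. V x j)"
proof -
  define e where "e = (\<lambda>i. if i = j then 1 else (0::nat))"
  have "e \<in> monomials n D" using assms unfolding monomials_def e_def by auto
  moreover have "(\<Prod>i<n. z i ^ e i) = z j" for z :: "nat \<Rightarrow> int"
  proof -
    have "(\<Prod>i<n. z i ^ e i) = (\<Prod>i<n. if i = j then z j else 1)"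
      by (rule prod.cong) (auto simp: e_def)
    then show ?thesis using assms(1) by (simp add: prod.delta)
  qed
  ultimately have "poly_eval (\<lambda>e'. if e' = e then 1 else 0) n D z = z j" for z
    by (simp add: poly_eval_monomial)
  then show ?thesis unfolding poly_mod_on_def by metis
qed

lemma poly_mod_on_add:
  assumes "poly_mod_on V A p n D f" "poly_mod_on V A p n D g"
  shows "poly_mod_on V A p n D (\<lambda>x. f x + g x)"
proof -
  obtain a b where
    a: "\<forall>x\<in>A. f x mod int p = poly_eval a n D (V x) mod int p" and
    b: "\<forall>x\<in>A. g x mod int p = poly_eval b n D (V x) mod int p"
    using assms unfolding poly_mod_on_def by blast
  have "(f x + g x) mod int p = poly_eval (\<lambda>e. a e + b e) n D (V x) mod int p" if "x \<in> A" for x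
    using a b that
    by (simp add: poly_eval_add mod_add_eq[symmetric, of "f x"]
        mod_add_eq[symmetric, of "poly_eval a n D (V x)"])
  then show ?thesis unfolding poly_mod_on_def by blast
qed

lemma poly_mod_on_smult:
  assumes "poly_mod_on V A p n D f"
  shows "poly_mod_on V A p n D (\<lambda>x. k * f x)"
proof -
  obtain a where a: "\<forall>x\<in>A. f x mod int p = poly_eval a n D (V x) mod int p"
    using assms unfolding poly_mod_on_def by blast
  have "(k * f x) mod int p = poly_eval (\<lambda>e. k * a e) n D (V x) mod int p" if "x \<in> A" for x
    using a that
    by (simp add: poly_eval_smult mod_mult_right_eq[symmetric, of k "f x"]
        mod_mult_right_eq[symmetric, of k "poly_eval a n D (V x)"])
  then show ?thesis unfolding poly_mod_on_def by blast
qed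

lemma poly_mod_on_mult:
  assumes "poly_mod_on V A p n D1 f" "poly_mod_on V A p n D2 g"
  shows "poly_mod_on V A p n (D1 + D2) (\<lambda>x. f x * g x)"
proof -
  obtain a1 a2 where
    a1: "\<forall>x\<in>A. f x mod int p = poly_eval a1 n D1 (V x) mod int p" and
    a2: "\<forall>x\<in>A. g x mod int p = poly_eval a2 n D2 (V x) mod int p"
    using assms unfolding poly_mod_on_def by blast
  obtain a where a: "\<And>z. poly_eval a1 n D1 z * poly_eval a2 n D2 z = poly_eval a n (D1 + D2) z"
    using poly_eval_mult by blast
  have "(f x * g x) mod int p = poly_eval a n (D1 + D2) (V x) mod int p" if "x \<in> A" for x
    using a1 a2 that
    by (simp flip: a add: mod_mult_eq[symmetric, of "f x"]
        mod_mult_eq[symmetric, of "poly_eval a1 n D1 (V x)"])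
  then show ?thesis unfolding poly_mod_on_def by blast
qed

lemma poly_mod_on_sum:
  assumes "finite I" "\<And>i. i \<in> I \<Longrightarrow> poly_mod_on V A p n D (\<lambda>x. f x i)"
  shows "poly_mod_on V A p n D (\<lambda>x. \<Sum>i\<in>I. f x i)"
  using assms by (induction I rule: finite_induct) (simp_all add: poly_mod_on_const poly_mod_on_add)

lemma poly_mod_on_prod:
  assumes "finite I" "\<And>i. i \<in> I \<Longrightarrow> poly_mod_on V A p n D (\<lambda>x. f x i)"
  shows "poly_mod_on V A p n (card I * D) (\<lambda>x. \<Prod>i\<in>I. f x i)"
  using assms by (induction I rule: finite_induct) (simp_all add: poly_mod_on_const poly_mod_on_mult)

lemma poly_mod_on_power:
  "poly_mod_on V A p n D f \<Longrightarrow> poly_mod_on V A p n (k * D) (\<lambda>x. f x ^ k)"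
  using poly_mod_on_prod[of "{..<k}" V A p n D "\<lambda>x i. f x"] by simp

lemma sum_bits_eq_mod: "(\<Sum>q<t. (n div 2^q mod 2) * 2^q) = (n::nat) mod 2^t"
proof (induction t)
  case (Suc t)
  have "n mod 2^Suc t = 2^t * (n div 2^t mod 2) + n mod 2^t"
    by (metis mod_mult2_eq mult.commute power_Suc2)
  with Suc show ?case by simp
qed simp

lemma eq_if_low_bits_eq:
  assumes "(x::nat) < 2^t" "y < 2^t" "\<forall>q<t. x div 2^q mod 2 = y div 2^q mod 2"
  shows "x = y"
proof -
  have "x = (\<Sum>q<t. (x div 2^q mod 2) * 2^q)" using sum_bits_eq_mod[of x t] assms(1) by simp
  also have "\<dots> = (\<Sum>q<t. (y div 2^q mod 2) * 2^q)" using assms(3) by simp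
  also have "\<dots> = y" using sum_bits_eq_mod[of y t] assms(2) by simp
  finally show ?thesis .
qed

lemma prod_bit_agreement:
  fixes x y :: nat
  assumes "x < 2^t" "y < 2^t"
  shows "(\<Prod>q<t. 1 - (int (x div 2^q mod 2) - int (y div 2^q mod 2))^2) = (if x = y then 1 else 0)"
proof -
  have "(\<Prod>q<t. 1 - (int (x div 2^q mod 2) - int (y div 2^q mod 2))^2)
      = (\<Prod>q<t. if x div 2^q mod 2 = y div 2^q mod 2 then 1 else 0)"
  proof (rule prod.cong[OF refl])
    fix q
    have "x div 2^q mod 2 < 2" "y div 2^q mod 2 < 2" by auto
    then show "1 - (int (x div 2^q mod 2) - int (y div 2^q mod 2))^2
        = (if x div 2^q mod 2 = y div 2^q mod 2 then 1 else 0)"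
      by (cases "x div 2^q mod 2"; cases "y div 2^q mod 2") (auto simp: power2_eq_square)
  qed
  also have "\<dots> = (if \<forall>q<t. x div 2^q mod 2 = y div 2^q mod 2 then 1 else 0)"
    by (induction t) (auto simp: less_Suc_eq)
  also have "\<dots> = (if x = y then 1 else 0)"
    using eq_if_low_bits_eq[OF assms] by auto
  finally show ?thesis .
qed

definition bounded_inputs :: "nat \<Rightarrow> nat \<Rightarrow> ((nat \<Rightarrow> nat) \<times> nat) set" where
  "bounded_inputs m r = {x. (\<forall>i\<in>{1..m}. fst x i < r) \<and> snd x < r}"

lemma input_bits_entry:
  assumes "q < t" "j < m"
  shows "input_bits m t c l (j * t + q) = int (c (j + 1) div 2^q mod 2)"
  using assms by (simp add: input_bits_def)

lemma input_bits_last: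
  assumes "q < t"
  shows "input_bits m t c l (m * t + q) = int (l div 2^q mod 2)"
  using assms by (simp add: input_bits_def)

lemma poly_mod_on_bit_agreement:
  assumes "j < n" "k < n"
  shows "poly_mod_on V A p n 2 (\<lambda>x. 1 - (V x j - V x k)^2)"
proof -
  have "poly_mod_on V A p n 1 (\<lambda>x. V x j + (-1) * V x k)"
    using assms by (intro poly_mod_on_add poly_mod_on_smult poly_mod_on_var) auto
  then have "poly_mod_on V A p n (1 + 1) (\<lambda>x. (V x j - V x k) * (V x j - V x k))"
    by (intro poly_mod_on_mult) simp_all
  then have "poly_mod_on V A p n 2 (\<lambda>x. (V x j - V x k)^2)"
    by (simp only: one_add_one power2_eq_square)
  then have "poly_mod_on V A p n 2 (\<lambda>x. 1 + (-1) * (V x j - V x k)^2)"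
    by (intro poly_mod_on_add poly_mod_on_const poly_mod_on_smult)
  then show ?thesis by simp
qed

lemma Ind_eq_prod_bit_agreement:
  assumes "1 \<le> i" "i \<le> m" "c i < 2^t" "l < 2^t"
  shows "Ind m c l i
    = (\<Prod>q<t. 1 - (input_bits m t c l ((i - 1) * t + q) - input_bits m t c l (m * t + q))^2)"
proof -
  have "(\<Prod>q<t. 1 - (input_bits m t c l ((i - 1) * t + q) - input_bits m t c l (m * t + q))^2)
      = (\<Prod>q<t. 1 - (int (c i div 2^q mod 2) - int (l div 2^q mod 2))^2)"
  proof (intro prod.cong refl)
    fix q assume "q \<in> {..<t}"
    moreover have "i - 1 < m" "i - 1 + 1 = i" using assms(1,2) by auto
    ultimately show "1 - (input_bits m t c l ((i - 1) * t + q) - input_bits m t c l (m * t + q))^2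
        = 1 - (int (c i div 2^q mod 2) - int (l div 2^q mod 2))^2"
      by (simp only: input_bits_entry input_bits_last lessThan_iff)
  qed
  then show ?thesis using assms by (simp add: prod_bit_agreement Ind_def)
qed

lemma poly_mod_on_Ind:
  assumes "1 \<le> t" "r \<le> 2^t"
  shows "poly_mod_on (case_prod (input_bits m t)) (bounded_inputs m r) p ((m + 1) * t) (2 * t)
           (\<lambda>x. Ind m (fst x) (snd x) i)"
proof (cases "1 \<le> i \<and> i \<le> m")
  case False
  then have "(\<lambda>x. Ind m (fst x) (snd x) i) = (\<lambda>x. 0)" by (auto simp: Ind_def)
  then show ?thesis using poly_mod_on_const by metis
next
  case True
  let ?V = "case_prod (input_bits m t)"
  have "(i - 1) * t + q < (m + 1) * t" "m * t + q < (m + 1) * t" if "q < t" for q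
  proof -
    have "(i - 1 + 1) * t \<le> m * t" using True by (intro mult_le_mono1) simp
    then show "(i - 1) * t + q < (m + 1) * t" "m * t + q < (m + 1) * t" using that by simp_all
  qed
  then have "poly_mod_on ?V (bounded_inputs m r) p ((m + 1) * t) (card {..<t} * 2)
      (\<lambda>x. \<Prod>q<t. 1 - (?V x ((i - 1) * t + q) - ?V x (m * t + q))^2)"
    by (intro poly_mod_on_prod poly_mod_on_bit_agreement) auto
  then have "poly_mod_on ?V (bounded_inputs m r) p ((m + 1) * t) (2 * t)
      (\<lambda>x. \<Prod>q<t. 1 - (?V x ((i - 1) * t + q) - ?V x (m * t + q))^2)"
    by (simp only: card_lessThan mult.commute[of t 2])
  moreover have "Ind m (fst x) (snd x) i
      = (\<Prod>q<t. 1 - (?V x ((i - 1) * t + q) - ?V x (m * t + q))^2)"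
    if "x \<in> bounded_inputs m r" for x
  proof -
    have "fst x i < 2^t" "snd x < 2^t"
      using that True assms(2) unfolding bounded_inputs_def by (auto intro: order.strict_trans2)
    with True show ?thesis unfolding split_beta by (intro Ind_eq_prod_bit_agreement) auto
  qed
  ultimately show ?thesis by (auto elim!: poly_mod_on_cong)
qed

lemma poly_mod_on_mat_vec:
  "(\<And>i. poly_mod_on V A p n D (\<lambda>x. X x i)) \<Longrightarrow> poly_mod_on V A p n D (\<lambda>x. mat_vec M N (X x) k)"
  unfolding mat_vec_def by (intro poly_mod_on_sum poly_mod_on_smult) auto

lemma poly_mod_on_vmod:
  "poly_mod_on V A p n D (\<lambda>x. Y x k) \<Longrightarrow> poly_mod_on V A p n D (\<lambda>x. vmod (Y x) p k)"
  unfolding vmod_def by (rule poly_mod_on_mod)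

lemma poly_mod_on_ip:
  "poly_mod_on V A p n D (\<lambda>x. Y x k) \<Longrightarrow> poly_mod_on V A p n ((p - 1) * D) (\<lambda>x. ip p (Y x) k)"
  unfolding ip_def by (intro poly_mod_on_mod poly_mod_on_power)

lemma b_vec_poly_mod:
  assumes "1 \<le> t" "r \<le> 2^t"
  shows "\<exists>a. \<forall>c l. (\<forall>i\<in>{1..2^d}. c i < r) \<and> l < r \<longrightarrow>
           b_vec d p c l h = poly_eval a ((2^d + 1) * t) (2 * t * (p - 1)^2) (input_bits (2^d) t c l) mod int p"
proof -
  let ?V = "case_prod (input_bits (2^d) t)" and ?A = "bounded_inputs (2^d) r"
  have "2 * t * (p - 1)^2 = (p - 1) * ((p - 1) * (2 * t))"
    by (simp add: power2_eq_square)
  then have "poly_mod_on ?V ?A p ((2^d + 1) * t) (2 * t * (p - 1)^2)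
      (\<lambda>x. b_vec d p (fst x) (snd x) h)"
    unfolding b_vec_def SPiRiT_def
    by (simp only:) (intro poly_mod_on_vmod poly_mod_on_mat_vec poly_mod_on_ip poly_mod_on_Ind assms)
  moreover have "b_vec d p c l h mod int p = b_vec d p c l h" for c l
    unfolding b_vec_def SPiRiT_def vmod_def by simp
  ultimately show ?thesis
    unfolding poly_mod_on_def bounded_inputs_def by (auto simp: split_beta)
qed

lemma node_level:
  assumes "1 \<le> i" "i \<le> (2::nat)^d" "h \<le> d"
  shows "2^(d - h) \<le> (2^d + i - 1) div 2^h" "(2^d + i - 1) div 2^h < 2^(d - h + 1)"
proof -
  have "(2::nat)^(d - h) * 2^h = 2^d" "(2::nat)^(d - h + 1) * 2^h = 2 * 2^d"
    using assms(3) by (simp_all flip: power_add)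
  then have "2^(d - h) * 2^h \<le> 2^d + i - 1" "2^d + i - 1 < 2^(d - h + 1) * 2^h"
    using assms by simp_all
  then show "2^(d - h) \<le> (2^d + i - 1) div 2^h" "(2^d + i - 1) div 2^h < 2^(d - h + 1)"
    by (simp_all add: less_eq_div_iff_mult_less_eq less_mult_imp_div_less)
qed

lemma pow2_level_unique:
  assumes "(2::nat)^a \<le> k" "k < 2^(a + 1)" "2^b \<le> k" "k < 2^(b + 1)"
  shows "a = b"
proof (rule ccontr)
  assume "a \<noteq> b"
  then have "(2::nat)^(a + 1) \<le> 2^b \<or> (2::nat)^(b + 1) \<le> 2^a"
    by (metis linorder_neqE_nat Suc_eq_plus1 Suc_leI power_increasing one_le_numeral)
  then show False using assms by linarith
qed

lemma Anc_eq_image: "Anc d i = (\<lambda>h. (2^d + i - 1) div 2^h) ` {..d}"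
  unfolding Anc_def by auto

lemma finite_Anc: "finite (Anc d i)"
  unfolding Anc_eq_image by simp

lemma card_Anc_le: "card (Anc d i) \<le> d + 1"
  unfolding Anc_eq_image using card_image_le[of "{..d}"] by simp

lemma leaf_in_Anc: "2^d + i - 1 \<in> Anc d i"
  unfolding Anc_def by force

lemma root_in_Anc:
  assumes "1 \<le> i" "i \<le> (2::nat)^d"
  shows "1 \<in> Anc d i"
proof -
  have "(2^d + i - 1) div 2^d = 1" using node_level[OF assms, of d] by simp
  then show ?thesis unfolding Anc_def by force
qed

lemma leaf_in_Anc_imp_eq:
  assumes "1 \<le> i" "i \<le> (2::nat)^d" "1 \<le> i'" "i' \<le> 2^d" "2^d + i' - 1 \<in> Anc d i"
  shows "i = i'"
proof -
  obtain h where h: "h \<le> d" "(2^d + i - 1) div 2^h = 2^d + i' - 1"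
    using assms(5) unfolding Anc_def by auto
  have "2^(d - h) \<le> 2^d + i' - 1" "2^d + i' - 1 < 2^(d - h + 1)"
    using node_level[OF assms(1,2) h(1)] h(2) by auto
  moreover have "2^(d - 0) \<le> 2^d + i' - 1" "2^d + i' - 1 < 2^(d - 0 + 1)"
    using node_level[OF assms(3,4), of 0] by auto
  ultimately have "d - h = d - 0" by (rule pow2_level_unique)
  then have "h = 0" using h(1) by simp
  with h show ?thesis using assms by simp
qed

lemma Lop_eq_image: "Lop d j = (\<lambda>k. k - 1) ` {k \<in> Anc d j. odd k \<and> 3 \<le> k}"
  unfolding Lop_def by auto

lemma finite_Lop: "finite (Lop d j)"
  unfolding Lop_eq_image using finite_Anc by simp

lemma card_Lop_le:
  assumes "1 \<le> j" "j \<le> (2::nat)^d"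
  shows "card (Lop d j) \<le> d"
proof -
  have "card (Lop d j) \<le> card {k \<in> Anc d j. odd k \<and> 3 \<le> k}"
    unfolding Lop_eq_image by (rule card_image_le) (simp add: finite_Anc)
  also have "\<dots> \<le> card (Anc d j - {1})"
    by (rule card_mono) (auto simp: finite_Anc)
  also have "\<dots> \<le> d"
    using root_in_Anc[OF assms] card_Anc_le[of d j] by (simp add: finite_Anc)
  finally show ?thesis .
qed

lemma Lop_subset:
  assumes "j \<le> (2::nat)^d"
  shows "Lop d j \<subseteq> {1..2 * 2^d - 1}"
proof
  fix k assume "k \<in> Lop d j"
  then obtain h where h: "k = (2^d + j - 1) div 2^h - 1" "3 \<le> (2^d + j - 1) div 2^h"
    unfolding Lop_def Anc_def by auto
  have "(2^d + j - 1) div 2^h \<le> 2^d + j - 1" by (rule div_le_dividend)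
  then have "(2^d + j - 1) div 2^h \<le> 2 * 2^d - 1" using assms by linarith
  then show "k \<in> {1..2 * 2^d - 1}" using h by (simp only: atLeastAtMost_iff) linarith
qed

text \<open>The nodes of \<open>Lop d j\<close> are the roots of the dyadic decomposition of the leaves
  \<open>1, \<dots>, j - 1\<close>: no leaf \<open>i \<ge> j\<close> lies below them, every leaf \<open>i < j\<close> does.\<close>

lemma Lop_disjoint_Anc:
  assumes "1 \<le> j" "j \<le> i" "i \<le> (2::nat)^d"
  shows "Lop d j \<inter> Anc d i = {}"
proof (intro equals0I)
  fix k assume k: "k \<in> Lop d j \<inter> Anc d i"
  then obtain B h where B: "k = B - 1" "odd B" "3 \<le> B" "h \<le> d" "B = (2^d + j - 1) div 2^h"
    unfolding Lop_def Anc_def by auto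
  obtain h' where h': "h' \<le> d" "k = (2^d + i - 1) div 2^h'"
    using k unfolding Anc_def by auto
  have B_level: "2^(d - h) \<le> B" "B < 2^(d - h + 1)"
    using node_level[OF assms(1) _ B(4)] B(5) assms by auto
  then have "d - h \<noteq> 0" using B(3) by (intro notI) simp
  then have "B \<noteq> 2^(d - h)" using B(2) by auto
  then have "2^(d - h) \<le> k" "k < 2^(d - h + 1)" using B_level B(1) by auto
  moreover have "2^(d - h') \<le> k" "k < 2^(d - h' + 1)"
    using node_level[OF _ assms(3) h'(1)] h'(2) assms(1,2) by auto
  ultimately have "h = h'" using pow2_level_unique B(4) h'(1) by (metis diff_diff_cancel)
  then have "B \<le> k" using h'(2) B(5) assms(2) by (simp add: div_le_mono)
  then show False using B(1,3) by simp
qed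

lemma div2_eq_imp_succ:
  assumes "(a::nat) div 2 = b div 2" "a < b"
  shows "b = a + 1" "even a"
proof -
  have "a mod 2 < b mod 2" using assms div_mult_mod_eq[of a 2] div_mult_mod_eq[of b 2] by linarith
  then have "a mod 2 = 0" "b mod 2 = 1" by auto
  then show "b = a + 1" "even a" using assms(1) div_mult_mod_eq[of a 2] div_mult_mod_eq[of b 2]
    by auto
qed

lemma Lop_meets_Anc:
  assumes "1 \<le> i" "i \<le> j" "j < (2::nat)^d"
  shows "Lop d (j + 1) \<inter> Anc d i \<noteq> {}"
proof -
  define a b where "a = 2^d + i - 1" and "b = (2::nat)^d + (j + 1) - 1"
  define P where "P = (\<lambda>h. a div 2^h = b div 2^h)"
  have "a div 2^d = 1" "b div 2^d = 1"
    using node_level[of i d d] node_level[of "j + 1" d d] assms unfolding a_def b_def by auto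
  then have "P d" unfolding P_def by simp
  define h0 where "h0 = (LEAST h. P h)"
  have "P h0" "h0 \<le> d" unfolding h0_def using \<open>P d\<close> by (auto intro: LeastI Least_le)
  have "a < b" unfolding a_def b_def using assms by simp
  then have "h0 \<noteq> 0" using \<open>P h0\<close> unfolding P_def by (intro notI) simp
  then obtain g where g: "h0 = g + 1" by (metis Suc_eq_plus1 not0_implies_Suc)
  have "\<not> P g" using not_less_Least[of g P] g unfolding h0_def by simp
  define A B where "A = a div 2^g" and "B = b div 2^g"
  have "A div 2 = B div 2"
    using \<open>P h0\<close> unfolding P_def A_def B_def g
    by (metis div_mult2_eq power_Suc2 Suc_eq_plus1)
  moreover have "A < B"
    using \<open>\<not> P g\<close> \<open>a < b\<close> unfolding P_def A_def B_def by (simp add: div_le_mono le_neq_implies_less)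
  ultimately have AB: "B = A + 1" "even A" by (rule div2_eq_imp_succ)+
  have "g < d" using \<open>h0 \<le> d\<close> g by simp
  have "B \<in> Anc d (j + 1)" unfolding Anc_def B_def b_def using \<open>g < d\<close> by fastforce
  moreover have "2 \<le> B"
  proof -
    have "(2::nat)^1 \<le> 2^(d - g)" using \<open>g < d\<close> by (intro power_increasing) auto
    then show ?thesis
      using node_level[of "j + 1" d g] assms \<open>g < d\<close> unfolding B_def b_def by simp
  qed
  ultimately have "A \<in> Lop d (j + 1)"
    unfolding Lop_def using AB by (intro CollectI exI[of _ B]) (auto simp: odd_pos elim: oddE)
  moreover have "A \<in> Anc d i" unfolding Anc_def A_def a_def using \<open>g < d\<close> by fastforce
  ultimately show ?thesis by blast
qed

lemma ip_vmod_eq: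
  assumes "prime p" "0 \<le> y k"
  shows "ip p (vmod y p) k = (if int p dvd y k then 0 else 1)"
proof -
  obtain n where n: "y k = int n" using assms(2) nonneg_int_cases by metis
  have "p > 1" using prime_gt_1_nat assms(1) by simp
  show ?thesis
  proof (cases "p dvd n")
    case True
    then show ?thesis using \<open>p > 1\<close> n by (simp add: ip_def vmod_def zero_power)
  next
    case False
    then have "n^(p - 1) mod p = 1"
      using fermat_theorem[OF assms(1)] \<open>p > 1\<close> unfolding cong_def by simp
    then have "y k^(p - 1) mod int p = 1" using n by (metis of_nat_1 of_nat_mod of_nat_power)
    then show ?thesis using False n by (simp add: ip_def vmod_def power_mod)
  qed
qed

lemma tree_mat_apply:
  "mat_vec (tree_mat d) (2^d) x k = (\<Sum>i\<in>{i \<in> {1..2^d}. k \<in> Anc d i}. x i)"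
proof -
  have "mat_vec (tree_mat d) (2^d) x k = (\<Sum>i\<in>{1..2^d}. if k \<in> Anc d i then x i else 0)"
    unfolding mat_vec_def tree_mat_def by (intro sum.cong) auto
  then show ?thesis by (subst sum.inter_filter) simp_all
qed

lemma roots_mat_apply:
  assumes "1 \<le> j" "j < 2^d"
  shows "mat_vec (roots_mat d) (2 * 2^d - 1) z j = sum z (Lop d (j + 1))"
proof -
  have "mat_vec (roots_mat d) (2 * 2^d - 1) z j
      = (\<Sum>k\<in>{1..2 * 2^d - 1}. if k \<in> Lop d (j + 1) then z k else 0)"
    unfolding mat_vec_def roots_mat_def using assms by (intro sum.cong) auto
  also have "\<dots> = sum z (Lop d (j + 1))"
    using Lop_subset[of "j + 1" d] assms by (simp add: sum.inter_restrict[symmetric] Int_absorb1)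
  finally show ?thesis .
qed

lemma roots_mat_apply_last: "mat_vec (roots_mat d) (2 * 2^d - 1) z (2^d) = z 1"
proof -
  have "mat_vec (roots_mat d) (2 * 2^d - 1) z (2^d) = (\<Sum>k\<in>{1..2 * 2^d - 1}. if k = 1 then z k else 0)"
    unfolding mat_vec_def roots_mat_def by (intro sum.cong) auto
  also have "\<dots> = z 1"
  proof -
    have "(1::nat) \<le> 2^d" by simp
    then have "(1::nat) \<in> {1..2 * 2^d - 1}" by (simp only: atLeastAtMost_iff) linarith
    then show ?thesis by (simp only: sum.delta finite_atLeastAtMost if_True)
  qed
  finally show ?thesis .
qed

text \<open>The sums have at most \<open>d\<close> terms, so \<open>d < p\<close> keeps the nonzero ones nonzero mod \<open>p\<close>.\<close>

lemma ip_roots_mat_step: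
  assumes p: "prime p" "d < p" and s: "1 \<le> s" "s \<le> 2^d"
    and z01: "\<And>k. z k = 0 \<or> z k = 1"
    and path: "\<And>k. k \<in> Anc d s \<Longrightarrow> z k = 1"
    and before: "\<And>j k. 1 \<le> j \<Longrightarrow> j < s \<Longrightarrow> k \<in> Lop d (j + 1) \<Longrightarrow> z k = 0"
    and j: "1 \<le> j" "j \<le> 2^d"
  shows "ip p (vmod (mat_vec (roots_mat d) (2 * 2^d - 1) z) p) j = (if s \<le> j then 1 else 0)"
proof -
  let ?w = "mat_vec (roots_mat d) (2 * 2^d - 1) z"
  have "?w j = (if s \<le> j then 1 else 0) \<or> (s \<le> j \<and> 1 \<le> ?w j \<and> ?w j \<le> int d)"
  proof (cases "j = 2^d")
    case True
    then show ?thesis using path root_in_Anc[OF s] s roots_mat_apply_last[of d z] by simp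
  next
    case False
    then have w: "?w j = sum z (Lop d (j + 1))" using j roots_mat_apply[of j d z] by simp
    show ?thesis
    proof (cases "s \<le> j")
      case True
      then obtain k where k: "k \<in> Lop d (j + 1)" "k \<in> Anc d s"
      proof -
        have "j < 2^d" using j False by simp
        from Lop_meets_Anc[OF s(1) True this] show ?thesis using that by blast
      qed
      have z_le: "0 \<le> z k" "z k \<le> 1" for k using z01[of k] by auto
      have "1 \<le> sum z (Lop d (j + 1))"
        using member_le_sum[of k "Lop d (j + 1)" z] k(1) finite_Lop z_le path[OF k(2)] by simp
      moreover have "sum z (Lop d (j + 1)) \<le> int (card (Lop d (j + 1)))"
        using sum_bounded_above[of "Lop d (j + 1)" z 1] z_le by simp
      moreover have "card (Lop d (j + 1)) \<le> d" using j False by (intro card_Lop_le) auto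
      ultimately show ?thesis using w True by simp
    next
      case False
      then show ?thesis using w before[OF j(1)] by simp
    qed
  qed
  moreover have "\<not> int p dvd x" if "0 < x" "x < int p" for x
    using that zdvd_imp_le by fastforce
  moreover have "1 < p" using p(1) prime_gt_1_nat by blast
  ultimately show ?thesis using ip_vmod_eq[OF p(1), of ?w j] p(2) by auto
qed

lemma pair_mat_step:
  assumes s: "1 \<le> s" "s \<le> N" and z: "\<And>k. 1 \<le> k \<Longrightarrow> k \<le> N \<Longrightarrow> z k = (if s \<le> k then 1 else 0)"
    and k: "1 \<le> k" "k \<le> N"
  shows "mat_vec pair_mat N z k = (if k = s then 1 else 0)"
proof -
  have "mat_vec pair_mat N z k
      = (\<Sum>i\<in>{1..N}. (if i = k then z i else 0) - (if 2 \<le> k \<and> i = k - 1 then z i else 0))"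
    unfolding mat_vec_def pair_mat_def by (intro sum.cong) auto
  also have "\<dots> = (\<Sum>i\<in>{1..N}. if i = k then z i else 0)
      - (\<Sum>i\<in>{1..N}. if 2 \<le> k \<and> i = k - 1 then z i else 0)"
    by (rule sum_subtractf)
  also have "\<dots> = z k - (if 2 \<le> k then z (k - 1) else 0)"
  proof (cases "2 \<le> k")
    case True
    then have "k - 1 \<in> {1..N}" using k by (simp only: atLeastAtMost_iff) linarith
    with True k show ?thesis by (simp add: sum.delta')
  qed (use k in \<open>simp add: sum.delta'\<close>)
  also have "\<dots> = (if k = s then 1 else 0)"
    using z[OF k] z[of "k - 1"] k s by (cases "2 \<le> k") auto
  finally show ?thesis .
qed

lemma sketch_mat_point:
  assumes "1 \<le> s" "s \<le> N" and u: "\<And>k. 1 \<le> k \<Longrightarrow> k \<le> N \<Longrightarrow> u k = (if k = s then 1 else 0)"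
  shows "mat_vec sketch_mat N u h = int ((s - 1) div 2^(h - 1) mod 2)"
proof -
  have "mat_vec sketch_mat N u h = (\<Sum>k\<in>{1..N}. if k = s then sketch_mat h k else 0)"
    unfolding mat_vec_def using u by (intro sum.cong) auto
  also have "\<dots> = sketch_mat h s" using assms(1,2) by simp
  finally show ?thesis unfolding sketch_mat_def .
qed

lemma one_plus_sum_bits:
  assumes "1 \<le> s" "s \<le> (2::nat)^d"
  shows "1 + (\<Sum>h=1..d. ((s - 1) div 2^(h - 1) mod 2) * 2^(h - 1)) = s"
  using sum_bits_eq_mod[of "s - 1" d] assms by (simp add: sum.atLeast1_atMost_eq)

lemma SPiRiT_first_nonzero:
  assumes p: "prime p" "d < p" and s: "1 \<le> s" "s \<le> 2^d"
    and x_nonneg: "\<And>i. 0 \<le> x i"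
    and x_before: "\<And>i. 1 \<le> i \<Longrightarrow> i < s \<Longrightarrow> x i = 0"
    and good: "\<And>k. k \<in> Anc d s \<Longrightarrow> \<not> int p dvd mat_vec (tree_mat d) (2^d) x k"
  shows "SPiRiT d p x h = int ((s - 1) div 2^(h - 1) mod 2)"
proof -
  let ?cnt = "mat_vec (tree_mat d) (2^d) x"
  define z where "z = ip p (vmod ?cnt p)"
  define y where "y = ip p (vmod (mat_vec (roots_mat d) (2 * 2^d - 1) z) p)"
  have z: "z k = (if int p dvd ?cnt k then 0 else 1)" for k
    unfolding z_def using ip_vmod_eq[OF p(1)] x_nonneg by (simp add: tree_mat_apply sum_nonneg)
  have "z k = 0" if j: "1 \<le> j" "j < s" and k: "k \<in> Lop d (j + 1)" for j k
  proof -
    have "x i = 0" if "i \<in> {1..2^d}" "k \<in> Anc d i" for i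
      using x_before Lop_disjoint_Anc[of "j + 1" i d] that k j by fastforce
    then have "?cnt k = 0" by (simp add: tree_mat_apply)
    then show ?thesis by (simp add: z)
  qed
  then have y: "y j = (if s \<le> j then 1 else 0)" if "1 \<le> j" "j \<le> 2^d" for j
    unfolding y_def using that p s good by (intro ip_roots_mat_step) (auto simp: z)
  have "mat_vec sketch_mat (2^d) (mat_vec pair_mat (2^d) y) h = int ((s - 1) div 2^(h - 1) mod 2)"
    using s y by (intro sketch_mat_point pair_mat_step) auto
  moreover have "1 < p" using p(1) prime_gt_1_nat by blast
  moreover have "SPiRiT d p x = vmod (mat_vec sketch_mat (2^d) (mat_vec pair_mat (2^d) y)) p"
    unfolding SPiRiT_def z_def y_def ..
  ultimately show ?thesis by (simp add: vmod_def)
qed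

lemma idx_first_match:
  assumes "prime p" "d < p" and I: "{i \<in> {1..2^d}. c i = l} \<noteq> {}"
    and good: "\<And>k. k \<in> Anc d (Min {i \<in> {1..2^d}. c i = l}) \<Longrightarrow>
                 \<not> int p dvd mat_vec (tree_mat d) (2^d) (Ind (2^d) c l) k"
  shows "idx d p c l = Min {i \<in> {1..2^d}. c i = l}"
proof -
  let ?s = "Min {i \<in> {1..2^d}. c i = l}"
  have s: "1 \<le> ?s" "?s \<le> 2^d" using Min_in[OF _ I] by auto
  have "Ind (2^d) c l i = 0" if "1 \<le> i" "i < ?s" for i
  proof -
    have "i \<notin> {i \<in> {1..2^d}. c i = l}"
    proof
      assume "i \<in> {i \<in> {1..2^d}. c i = l}"
      then have "?s \<le> i" by (intro Min_le) simp_all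
      with that(2) show False by simp
    qed
    then show ?thesis using that(1) by (simp add: Ind_def)
  qed
  then have "b_vec d p c l h = int ((?s - 1) div 2^(h - 1) mod 2)" for h
    unfolding b_vec_def using assms s by (intro SPiRiT_first_nonzero) (auto simp: Ind_def)
  then show ?thesis
    unfolding idx_def using one_plus_sum_bits[OF s] by (simp add: nat_int)
qed

lemma log2_bounds:
  assumes "2 \<le> d"
  shows "1 \<le> log 2 (real d)" "log 2 (real d) \<le> real d"
proof -
  show "1 \<le> log 2 (real d)" using assms by simp
  have "real d < 2 ^ d" using less_exp[of d] by (metis of_nat_less_iff of_nat_numeral of_nat_power)
  then have "log 2 (real d) < log 2 (2 ^ d)" using assms by (subst log_less_cancel_iff) auto
  then show "log 2 (real d) \<le> real d" by simp
qed

lemma Primes_ms_pow2: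
  assumes "2 \<le> d"
  shows "Primes_ms (2^d) d = {p. prime p \<and> d < p \<and>
           card {q. prime q \<and> d < q \<and> q < p} < nat (1 + \<lfloor>real d ^ 2 / log 2 (real d)\<rfloor>)}"
proof -
  have "log (real d) (real (2^d)) = log 2 (real (2^d)) / log 2 (real d)"
    by (rule log_base_change) (use assms in auto)
  then have "real d * log (real d) (real (2^d)) = real d ^ 2 / log 2 (real d)"
    by (simp add: power2_eq_square)
  then show ?thesis unfolding Primes_ms_def Let_def by simp
qed

lemma mem_Primes_ms_pow2_iff:
  assumes "2 \<le> d"
  shows "p \<in> Primes_ms (2^d) d \<longleftrightarrow>
           prime p \<and> d < p \<and> real (card {q. prime q \<and> d < q \<and> q < p}) \<le> real d ^ 2 / log 2 (real d)"
proof -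
  have "n < nat (1 + \<lfloor>x\<rfloor>) \<longleftrightarrow> real n \<le> x" for n :: nat and x :: real
  proof -
    have "n < nat (1 + \<lfloor>x\<rfloor>) \<longleftrightarrow> int n \<le> \<lfloor>x\<rfloor>" by (simp add: zless_nat_eq_int_zless) linarith
    then show ?thesis by (simp add: le_floor_iff)
  qed
  then show ?thesis unfolding Primes_ms_pow2[OF assms] by simp
qed

lemma card_first_primes_le:
  fixes b N :: nat
  shows "card {p. prime p \<and> b < p \<and> card {q. prime q \<and> b < q \<and> q < p} < N} \<le> N"
proof -
  define f where "f = (\<lambda>p. card {q::nat. prime q \<and> b < q \<and> q < p})"
  define S where "S = {p. prime p \<and> b < p \<and> f p < N}"
  have "f p < f p'" if "p \<in> S" "p < p'" for p p'
  proof -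
    have "{q. prime q \<and> b < q \<and> q < p} \<subset> {q. prime q \<and> b < q \<and> q < p'}"
      using that unfolding S_def by auto
    then show ?thesis unfolding f_def by (rule psubset_card_mono[rotated]) simp
  qed
  then have "inj_on f S" by (intro inj_onI) (metis less_irrefl linorder_neqE_nat)
  moreover have "f ` S \<subseteq> {..<N}" unfolding S_def by auto
  ultimately have "card S \<le> card {..<N}" by (intro card_inj_on_le) auto
  then show ?thesis unfolding S_def f_def by simp
qed

lemma card_Primes_ms_pow2_le:
  assumes "2 \<le> d"
  shows "real (card (Primes_ms (2^d) d)) \<le> 1 + real d ^ 2 / log 2 (real d)"
proof -
  have "card (Primes_ms (2^d) d) \<le> nat (1 + \<lfloor>real d ^ 2 / log 2 (real d)\<rfloor>)"
    unfolding Primes_ms_pow2[OF assms] by (rule card_first_primes_le)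
  moreover have "0 \<le> real d ^ 2 / log 2 (real d)" using log2_bounds[OF assms] by simp
  ultimately show ?thesis by linarith
qed

lemma prod_primes_dvd:
  fixes n :: nat
  assumes "finite Q" "\<And>q. q \<in> Q \<Longrightarrow> prime q \<and> q dvd n"
  shows "\<Prod>Q dvd n"
  using assms
proof (induction Q rule: finite_induct)
  case (insert q Q)
  then have "coprime q (\<Prod>Q)" by (intro prod_coprime_right) (auto intro: primes_coprime)
  with insert show ?case by (simp add: divides_mult)
qed simp

lemma pow_card_large_prime_divisors_le:
  fixes P b :: nat
  assumes "0 < P"
  shows "b ^ card {q. prime q \<and> b < q \<and> q dvd P} \<le> P"
proof -
  define B where "B = {q. prime q \<and> b < q \<and> q dvd P}"
  have "B \<subseteq> {..P}" unfolding B_def using assms by (auto intro: dvd_imp_le)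
  then have "finite B" by (rule finite_subset) simp
  have "b ^ card B = (\<Prod>q\<in>B. b)" by simp
  also have "\<dots> \<le> \<Prod>B" by (rule prod_mono) (auto simp: B_def)
  also have "\<dots> \<le> P"
    using prod_primes_dvd[OF \<open>finite B\<close>, of P] assms by (intro dvd_imp_le) (auto simp: B_def)
  finally show ?thesis unfolding B_def .
qed

lemma Primes_ms_has_non_divisor:
  assumes d: "2 \<le> d" and P: "0 < P" "P \<le> 2^(d * d)"
  shows "\<exists>p\<in>Primes_ms (2^d) d. \<not> p dvd P"
proof -
  let ?good = "\<lambda>q. prime q \<and> d < q \<and> \<not> q dvd P"
  obtain q :: nat where "prime q" "P + d < q" using bigger_prime by blast
  then have "?good q" using P(1) by (auto dest: dvd_imp_le)
  define p where "p = (LEAST q. ?good q)"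
  have p: "?good p" unfolding p_def using \<open>?good q\<close> by (rule LeastI)
  define c where "c = card {q. prime q \<and> d < q \<and> q < p}"
  have "{q. prime q \<and> d < q \<and> q < p} \<subseteq> {q. prime q \<and> d < q \<and> q dvd P}"
  proof (intro subsetI CollectI)
    fix q assume "q \<in> {q. prime q \<and> d < q \<and> q < p}"
    then show "prime q \<and> d < q \<and> q dvd P"
      using not_less_Least[of q ?good] unfolding p_def by auto
  qed
  moreover have "{q. prime q \<and> d < q \<and> q dvd P} \<subseteq> {..P}"
    using P(1) by (auto intro: dvd_imp_le)
  then have "finite {q. prime q \<and> d < q \<and> q dvd P}" by (rule finite_subset) simp
  ultimately have "c \<le> card {q. prime q \<and> d < q \<and> q dvd P}"
    unfolding c_def by (rule card_mono[rotated])
  then have "d ^ c \<le> d ^ card {q. prime q \<and> d < q \<and> q dvd P}"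
    using d by (intro power_increasing) auto
  also have "\<dots> \<le> 2^(d * d)" using pow_card_large_prime_divisors_le[OF P(1), of d] P(2) by linarith
  finally have "real (d ^ c) \<le> real (2 ^ (d * d))" by (simp only: of_nat_le_iff)
  then have "real d ^ c \<le> 2 ^ (d * d)" by simp
  then have "log 2 (real d ^ c) \<le> log 2 (2 ^ (d * d))"
    using d by (subst log_le_cancel_iff) auto
  then have "real c * log 2 (real d) \<le> real d ^ 2"
    by (simp add: log_nat_power power2_eq_square)
  moreover have "0 < log 2 (real d)" using log2_bounds(1)[OF d] by linarith
  ultimately have "p \<in> Primes_ms (2^d) d"
    using p by (simp add: mem_Primes_ms_pow2_iff[OF d] pos_le_divide_eq c_def)
  with p show ?thesis by blast
qed

lemma tree_count_le:
  assumes "\<And>i. x i = 0 \<or> x i = 1"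
  shows "mat_vec (tree_mat d) (2^d) x k \<le> int (2^d)"
proof -
  have "mat_vec (tree_mat d) (2^d) x k \<le> of_nat (card {i \<in> {1..2^d}. k \<in> Anc d i}) * 1"
    unfolding tree_mat_apply using assms by (intro sum_bounded_above) (metis order.refl zero_le_one)
  moreover have "card {i \<in> {1..2^d}. k \<in> Anc d i} \<le> card {1..(2::nat)^d}"
    by (intro card_mono) auto
  then have "int (card {i \<in> {1..2^d}. k \<in> Anc d i}) \<le> int (2^d)"
    by (simp only: of_nat_le_iff card_atLeastAtMost)
  ultimately show ?thesis by linarith
qed

lemma tree_count_on_path_ge:
  assumes "\<And>i. 0 \<le> x i" "1 \<le> s" "s \<le> 2^d" "k \<in> Anc d s"
  shows "x s \<le> mat_vec (tree_mat d) (2^d) x k"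
  unfolding tree_mat_apply using assms by (intro member_le_sum) simp_all

lemma tree_count_leaf:
  assumes "1 \<le> s" "s \<le> 2^d"
  shows "mat_vec (tree_mat d) (2^d) x (2^d + s - 1) = x s"
proof -
  have "{i \<in> {1..2^d}. 2^d + s - 1 \<in> Anc d i} = {s}"
    using leaf_in_Anc[of d s] leaf_in_Anc_imp_eq[of _ d s] assms by auto
  then show ?thesis by (simp add: tree_mat_apply)
qed

lemma exists_good_prime:
  assumes d: "2 \<le> d" and s: "1 \<le> s" "s \<le> 2^d"
    and x01: "\<And>i. x i = 0 \<or> x i = 1" and "x s = 1"
  shows "\<exists>p\<in>Primes_ms (2^d) d. \<forall>k\<in>Anc d s. \<not> int p dvd mat_vec (tree_mat d) (2^d) x k"
proof -
  let ?cnt = "mat_vec (tree_mat d) (2^d) x"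
  have "0 \<le> x i" for i using x01[of i] by auto
  then have cnt_ge: "1 \<le> ?cnt k" if "k \<in> Anc d s" for k
    using tree_count_on_path_ge[of x s d k] that s \<open>x s = 1\<close> by simp
  define S where "S = Anc d s - {2^d + s - 1}"
  define P where "P = (\<Prod>k\<in>S. nat (?cnt k))"
  have "finite S" unfolding S_def using finite_Anc by simp
  have "0 < P" unfolding P_def using cnt_ge \<open>finite S\<close> unfolding S_def by (intro prod_pos) fastforce
  have "card S \<le> d" unfolding S_def using leaf_in_Anc card_Anc_le[of d s] finite_Anc by simp
  have "P \<le> (\<Prod>k\<in>S. 2^d)" unfolding P_def by (rule prod_mono) (use tree_count_le[OF x01] in \<open>auto simp: nat_le_iff\<close>)
  also have "\<dots> \<le> (2^d)^d" using \<open>card S \<le> d\<close> by (simp add: power_increasing)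
  finally have "P \<le> 2^(d * d)" by (simp add: power_mult)
  then obtain p where p: "p \<in> Primes_ms (2^d) d" "\<not> p dvd P"
    using Primes_ms_has_non_divisor[OF d \<open>0 < P\<close>] by blast
  have "\<not> int p dvd ?cnt k" if "k \<in> Anc d s" for k
  proof (cases "k \<in> S")
    case True
    with \<open>finite S\<close> have "nat (?cnt k) dvd P" unfolding P_def by (rule dvd_prodI)
    moreover have "?cnt k = int (nat (?cnt k))" using cnt_ge[OF that] by simp
    ultimately show ?thesis using p(2) by (metis dvd_trans int_dvd_int_iff)
  next
    case False
    then have "?cnt k = 1" using that tree_count_leaf[OF s] \<open>x s = 1\<close> unfolding S_def by simp
    moreover have "p \<noteq> 1" using p(1) by (auto simp: mem_Primes_ms_pow2_iff[OF d])
    ultimately show ?thesis by simp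
  qed
  with p(1) show ?thesis by blast
qed

lemma min0_found_matches:
  assumes "2 \<le> d"
  shows "min0 {i \<in> {idx d p c l | p. p \<in> Primes_ms (2^d) d} \<inter> {1..2^d}. c i = l}
       = min0 {i \<in> {1..2^d}. c i = l}"
proof (cases "{i \<in> {1..2^d}. c i = l} = {}")
  case True
  then show ?thesis unfolding min0_def by auto
next
  case False
  let ?I = "{i \<in> {1..2^d}. c i = l}"
  let ?A = "{i \<in> {idx d p c l | p. p \<in> Primes_ms (2^d) d} \<inter> {1..2^d}. c i = l}"
  have "Min ?I \<in> ?I" using False by (intro Min_in) auto
  moreover have "Ind (2^d) c l i = 0 \<or> Ind (2^d) c l i = 1" for i by (simp add: Ind_def)
  ultimately obtain p where p: "p \<in> Primes_ms (2^d) d"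
    "\<forall>k\<in>Anc d (Min ?I). \<not> int p dvd mat_vec (tree_mat d) (2^d) (Ind (2^d) c l) k"
    using exists_good_prime[OF assms, of "Min ?I" "Ind (2^d) c l"] by (auto simp: Ind_def)
  then have "idx d p c l = Min ?I"
    using False by (intro idx_first_match) (auto simp: mem_Primes_ms_pow2_iff[OF assms])
  then have "Min ?I \<in> ?A" using p(1) \<open>Min ?I \<in> ?I\<close> by force
  moreover have "?A \<subseteq> ?I" by auto
  ultimately have "Min ?A = Min ?I"
    by (intro Min_eqI) (auto intro: finite_subset[of ?A ?I])
  then show ?thesis using \<open>Min ?I \<in> ?A\<close> False unfolding min0_def by auto
qed

lemma multiplicity_fact:
  fixes p n M :: nat
  assumes p: "prime p" and "n < p^(M + 1)"
  shows "multiplicity p (fact n :: nat) = (\<Sum>i=1..M. n div p^i)"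
  using assms(2)
proof (induction n)
  case (Suc n)
  have "p > 1" using p prime_gt_1_nat by simp
  define \<mu> where "\<mu> = multiplicity p (Suc n)"
  have "p^\<mu> \<le> Suc n" unfolding \<mu>_def by (intro dvd_imp_le multiplicity_dvd) simp
  then have "\<mu> \<le> M" using Suc.prems power_less_imp_less_exp[OF \<open>p > 1\<close>, of \<mu> "M + 1"] by simp
  have dvd_iff: "p^i dvd Suc n \<longleftrightarrow> i \<le> \<mu>" for i
    unfolding \<mu>_def using \<open>p > 1\<close> by (intro power_dvd_iff_le_multiplicity) auto
  have "multiplicity p (Suc n * fact n :: nat) = \<mu> + multiplicity p (fact n :: nat)"
    unfolding \<mu>_def using p by (intro prime_elem_multiplicity_mult_distrib) auto
  then have fact_Suc: "multiplicity p (fact (Suc n) :: nat) = \<mu> + multiplicity p (fact n :: nat)"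
    by simp
  have "Suc n div p^i = n div p^i + (if i \<le> \<mu> then 1 else 0)" for i
    using div_Suc[of n "p^i"] dvd_iff[of i] by (simp add: dvd_eq_mod_eq_0)
  then have "(\<Sum>i=1..M. Suc n div p^i) = (\<Sum>i=1..M. n div p^i) + (\<Sum>i\<in>{1..M}. if i \<in> {..\<mu>} then 1 else 0)"
    by (simp add: sum.distrib)
  also have "(\<Sum>i\<in>{1..M}. if i \<in> {..\<mu>} then 1 else 0) = (\<Sum>i\<in>{1..M} \<inter> {..\<mu>}. 1::nat)"
    by (rule sum.inter_restrict[symmetric]) simp
  also have "{1..M} \<inter> {..\<mu>} = {1..\<mu>}" using \<open>\<mu> \<le> M\<close> by auto
  finally show ?case using Suc fact_Suc by simp
qed simp

lemma double_div_bounds: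
  fixes n q :: nat
  assumes "0 < q"
  shows "2 * (n div q) \<le> 2 * n div q" "2 * n div q \<le> 2 * (n div q) + 1"
proof -
  have "n div q * q \<le> n" "n < n div q * q + q"
    using div_mult_mod_eq[of n q] mod_less_divisor[OF assms, of n] by linarith+
  then have "2 * (n div q) * q \<le> 2 * n" "2 * n < (2 * (n div q) + 2) * q"
    by (simp_all add: algebra_simps)
  then show "2 * (n div q) \<le> 2 * n div q" "2 * n div q \<le> 2 * (n div q) + 1"
    using assms less_mult_imp_div_less[of "2 * n" "2 * (n div q) + 2" q]
    by (simp_all add: less_eq_div_iff_mult_less_eq)
qed

text \<open>Legendre's formula writes the multiplicity as \<open>\<Sum>i. (\<lfloor>2n/p^i\<rfloor> - 2\<lfloor>n/p^i\<rfloor>)\<close>, a sum of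
  terms in \<open>{0, 1}\<close> that vanish once \<open>p^i > 2n\<close>.\<close>

lemma prime_power_multiplicity_central_binomial_le:
  fixes p n :: nat
  assumes p: "prime p" and n: "1 \<le> n"
  shows "p ^ multiplicity p (2 * n choose n) \<le> 2 * n"
proof (rule ccontr)
  define e where "e = multiplicity p (2 * n choose n)"
  define M where "M = 2 * n"
  assume "\<not> p ^ multiplicity p (2 * n choose n) \<le> 2 * n"
  then have big: "2 * n < p^e" unfolding e_def by simp
  have "p > 1" using p prime_gt_1_nat by simp
  have "2 * n < 2^(2 * n)" by (rule less_exp)
  also have "\<dots> \<le> 2^(M + 1)" unfolding M_def by (intro power_increasing) auto
  also have "\<dots> \<le> p^(M + 1)" using \<open>p > 1\<close> by (intro power_mono) auto
  finally have M: "2 * n < p^(M + 1)" "n < p^(M + 1)" by simp_all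
  have "fact (2 * n) = fact n * (fact n * (2 * n choose n) :: nat)"
    using binomial_fact_lemma[of n "2 * n"] by (simp add: mult.assoc)
  then have "multiplicity p (fact (2 * n) :: nat) = 2 * multiplicity p (fact n :: nat) + e"
    unfolding e_def using p by (simp add: prime_elem_multiplicity_mult_distrib)
  define t where "t = (\<lambda>i. 2 * n div p^i - 2 * (n div p^i))"
  have "0 < p^i" for i using \<open>p > 1\<close> by simp
  then have t: "2 * n div p^i = 2 * (n div p^i) + t i" "t i \<le> 1" for i
    unfolding t_def using double_div_bounds[of "p^i" n] by simp_all
  have t0: "t i = 0" if "e \<le> i" for i
  proof -
    have "p^e \<le> p^i" using that \<open>p > 1\<close> by (intro power_increasing) auto
    then show ?thesis using big unfolding t_def by simp
  qed
  have "e = (\<Sum>i=1..M. t i)"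
    using \<open>multiplicity p (fact (2 * n)) = _\<close> multiplicity_fact[OF p M(1)] multiplicity_fact[OF p M(2)]
    by (simp add: t(1) sum.distrib sum_distrib_left)
  also have "\<dots> \<le> (\<Sum>i=1..M. if i \<in> {..<e} then 1 else 0)"
    by (rule sum_mono) (use t(2) t0 in \<open>auto simp: not_less\<close>)
  also have "\<dots> = (\<Sum>i\<in>{1..M} \<inter> {..<e}. 1)"
    by (rule sum.inter_restrict[symmetric]) simp
  also have "\<dots> \<le> (\<Sum>i\<in>{1..<e}. 1)" by (rule sum_mono2) auto
  finally have "e \<le> e - 1" by simp
  moreover have "e \<noteq> 0" using big n by (intro notI) simp
  ultimately show False by simp
qed

lemma central_binomial_le_pow_prime_count:
  fixes n :: nat
  assumes n: "1 \<le> n"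
  shows "(2 * n choose n) \<le> (2 * n) ^ card {p. prime p \<and> p \<le> 2 * n}"
proof -
  define C where "C = (2 * n choose n)"
  have "C > 0" unfolding C_def by simp
  have pf: "prime q" "q ^ multiplicity q C \<le> 2 * n" if "q \<in> prime_factors C" for q
    using that prime_power_multiplicity_central_binomial_le[OF _ n]
    unfolding C_def by (auto simp: in_prime_factors_iff)
  have "prime_factors C \<subseteq> {p. prime p \<and> p \<le> 2 * n}"
  proof
    fix q assume q: "q \<in> prime_factors C"
    then have "1 \<le> multiplicity q C" using \<open>C > 0\<close> by (auto simp: prime_factors_multiplicity)
    then have "q ^ 1 \<le> q ^ multiplicity q C"
      using prime_gt_0_nat[OF pf(1)[OF q]] by (intro power_increasing) auto
    then show "q \<in> {p. prime p \<and> p \<le> 2 * n}" using pf[OF q] by simp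
  qed
  then have "card (prime_factors C) \<le> card {p. prime p \<and> p \<le> 2 * n}" by (intro card_mono) auto
  have "C = (\<Prod>q\<in>prime_factors C. q ^ multiplicity q C)"
    by (rule prime_factorization_nat[OF \<open>C > 0\<close>])
  also have "\<dots> \<le> (\<Prod>q\<in>prime_factors C. 2 * n)" by (rule prod_mono) (use pf in auto)
  also have "\<dots> = (2 * n) ^ card (prime_factors C)" by simp
  also have "\<dots> \<le> (2 * n) ^ card {p. prime p \<and> p \<le> 2 * n}"
    using n \<open>card (prime_factors C) \<le> _\<close> by (intro power_increasing) auto
  finally show ?thesis unfolding C_def .
qed

lemma chebyshev_lower_bound:
  fixes n :: nat
  assumes "1 \<le> n"
  shows "2 * real n \<le> (real (card {p. prime p \<and> p \<le> 2 * n}) + 1) * log 2 (2 * real n)"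
proof -
  let ?\<pi> = "card {p. prime p \<and> p \<le> 2 * n}"
  have "real (2 * n choose n) \<le> real ((2 * n) ^ ?\<pi>)"
    by (simp only: of_nat_le_iff) (rule central_binomial_le_pow_prime_count[OF assms])
  then have "4 ^ n / (2 * real n) \<le> (2 * real n) ^ ?\<pi>"
    using central_binomial_lower_bound[of n] assms by simp
  then have "4 ^ n \<le> (2 * real n) ^ (?\<pi> + 1)"
    using assms by (simp add: divide_le_eq mult.commute)
  moreover have "(4::real) ^ n = 2 ^ (2 * n)" by (simp add: power_mult)
  ultimately have "2 ^ (2 * n) \<le> (2 * real n) ^ (?\<pi> + 1)" by simp
  then have "log 2 (2 ^ (2 * n)) \<le> log 2 ((2 * real n) ^ (?\<pi> + 1))"
    using assms by (subst log_le_cancel_iff) auto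
  moreover have "log 2 ((2 * real n) ^ (?\<pi> + 1)) = real (?\<pi> + 1) * log 2 (2 * real n)"
    using assms by (intro log_nat_power) simp
  ultimately show ?thesis by (simp add: add.commute)
qed

lemma prime_count_below_Primes_ms:
  assumes d: "2 \<le> d" and p: "p \<in> Primes_ms (2^d) d" and "X < p"
  shows "real (card {q. prime q \<and> q \<le> X}) \<le> real d ^ 2 / log 2 (real d) + real d"
proof -
  have "{q. prime q \<and> q \<le> X} \<subseteq> {q. prime q \<and> d < q \<and> q < p} \<union> {1..d}"
    using \<open>X < p\<close> prime_gt_0_nat by (auto simp: Suc_le_eq)
  then have "card {q. prime q \<and> q \<le> X} \<le> card ({q. prime q \<and> d < q \<and> q < p} \<union> {1..d})"
    by (rule card_mono[rotated]) simp
  also have "\<dots> \<le> card {q. prime q \<and> d < q \<and> q < p} + d"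
    using card_Un_le[of "{q. prime q \<and> d < q \<and> q < p}" "{1..d}"] by simp
  finally show ?thesis using p by (simp add: mem_Primes_ms_pow2_iff[OF d])
qed

lemma Primes_ms_pow2_le:
  assumes d: "2 \<le> d" and p: "p \<in> Primes_ms (2^d) d"
  shows "p \<le> 128 * d^2"
proof (rule ccontr)
  define n where "n = 64 * d^2"
  define D L where "D = real d" and "L = log 2 (real d)"
  have DL: "2 \<le> D" "1 \<le> L" "L \<le> D" unfolding D_def L_def using d log2_bounds[OF d] by auto
  assume "\<not> p \<le> 128 * d^2"
  then have \<pi>: "real (card {q. prime q \<and> q \<le> 2 * n}) + 1 \<le> D^2 / L + D + 1"
    using prime_count_below_Primes_ms[OF d p, of "2 * n"] unfolding n_def D_def L_def by simp
  have n: "2 * real n = 2 ^ 7 * D^2" unfolding n_def D_def by simp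
  then have "log 2 (2 * real n) = log 2 (2 ^ 7) + log 2 (D^2)"
    using DL by (simp only: log_mult) simp_all
  also have "\<dots> = 7 + 2 * L"
    unfolding D_def L_def using d by (simp only: log_pow_cancel log_nat_power)
  finally have log_n: "log 2 (2 * real n) = 7 + 2 * L" .
  have "128 * D^2 = 2 * real n" using n by simp
  also have "\<dots> \<le> (real (card {q. prime q \<and> q \<le> 2 * n}) + 1) * (7 + 2 * L)"
    using chebyshev_lower_bound[of n] d unfolding log_n by (simp add: n_def)
  also have "\<dots> \<le> (D^2 / L + D + 1) * (7 + 2 * L)"
    using \<pi> DL by (intro mult_right_mono) auto
  also have "\<dots> = 7 * (D^2 / L) + 2 * D^2 + 7 * D + 2 * (D * L) + 7 + 2 * L"
    using DL by (simp add: field_simps power2_eq_square)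
  also have "\<dots> \<le> 7 * D^2 + 2 * D^2 + 7 * D + 2 * D^2 + 7 + 2 * D"
  proof -
    have "D^2 / L \<le> D^2" using DL by (simp add: divide_le_eq)
    moreover have "D * L \<le> D^2" using DL by (simp add: power2_eq_square mult_left_mono)
    ultimately show ?thesis using DL by linarith
  qed
  moreover have "2 * D \<le> D^2" "4 \<le> D^2"
    using DL mult_right_mono[of 2 D D] mult_mono[of 2 D 2 D] by (simp_all add: power2_eq_square)
  ultimately show False by linarith
qed

lemma card_Primes_ms_pow2_bigo:
  "(\<lambda>d::nat. real (card (Primes_ms (2^d) d)))
     \<in> O(\<lambda>d. (log 2 (real (2^d)))^2 / log 2 (log 2 (real (2^d))))"
proof (intro bigoI[where c = 2] eventually_at_top_linorderI[of 2])
  fix d :: nat assume d: "2 \<le> d"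
  have L: "1 \<le> log 2 (real d)" "log 2 (real d) \<le> real d" using log2_bounds[OF d] by auto
  moreover have "real d \<le> real d ^ 2" using d by (simp add: power2_eq_square)
  ultimately have "1 \<le> real d ^ 2 / log 2 (real d)" by (subst le_divide_eq_1_pos) linarith+
  then have "real (card (Primes_ms (2^d) d)) \<le> 2 * (real d ^ 2 / log 2 (real d))"
    using card_Primes_ms_pow2_le[OF d] by linarith
  then show "norm (real (card (Primes_ms (2^d) d)))
      \<le> 2 * norm ((log 2 (real (2^d)))^2 / log 2 (log 2 (real ((2::nat)^d))))"
    using L by simp
qed

lemma nat_ceiling_log2:
  fixes r :: nat
  assumes "2 \<le> r"
  shows "1 \<le> nat \<lceil>log 2 (real r)\<rceil>" "r \<le> 2 ^ nat \<lceil>log 2 (real r)\<rceil>"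
    "real (nat \<lceil>log 2 (real r)\<rceil>) \<le> 2 * log 2 (real r)"
proof -
  have l1: "1 \<le> log 2 (real r)" using assms by simp
  then show "1 \<le> nat \<lceil>log 2 (real r)\<rceil>" by linarith
  have "real r = 2 powr log 2 (real r)" using assms by simp
  also have "\<dots> \<le> 2 powr real (nat \<lceil>log 2 (real r)\<rceil>)" using l1 by (intro powr_mono) linarith+
  also have "\<dots> = real (2 ^ nat \<lceil>log 2 (real r)\<rceil>)" by (simp add: powr_realpow)
  finally show "r \<le> 2 ^ nat \<lceil>log 2 (real r)\<rceil>" by (simp only: of_nat_le_iff)
  show "real (nat \<lceil>log 2 (real r)\<rceil>) \<le> 2 * log 2 (real r)" using l1 by linarith
qed

lemma degree_bound:
  assumes d: "2 \<le> d" and r: "2 \<le> r" and p: "p \<in> Primes_ms (2^d) d"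
  shows "real (2 * nat \<lceil>log 2 (real r)\<rceil> * (p - 1)^2) \<le> 65536 * real d ^ 4 * log 2 (real r)"
proof -
  have "real p \<le> real (128 * d ^ 2)" using Primes_ms_pow2_le[OF d p] by (simp only: of_nat_le_iff)
  then have "real (p - 1) \<le> 128 * real d ^ 2" by simp
  then have "real (p - 1) ^ 2 \<le> (128 * real d ^ 2) ^ 2" by (intro power_mono) auto
  then have "real (p - 1) ^ 2 \<le> 16384 * real d ^ 4" by (simp add: power_mult_distrib flip: power_mult)
  moreover have "0 \<le> log 2 (real r)" using r by simp
  ultimately have "2 * real (nat \<lceil>log 2 (real r)\<rceil>) * real (p - 1) ^ 2
      \<le> 2 * (2 * log 2 (real r)) * (16384 * real d ^ 4)"
    using nat_ceiling_log2(3)[OF r] by (intro mult_mono) auto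
  then show ?thesis by simp
qed

theorem theorem4:
  fixes d r :: nat and c :: "nat \<Rightarrow> nat" and l :: nat
  assumes "d \<ge> 2" and "r \<ge> 2"
    and "\<forall>i\<in>{1..2^d}. c i < r" and "l < r"
  shows
    "min0 {i \<in> {idx d p c l | p. p \<in> Primes_ms (2^d) d} \<inter> {1..2^d}. c i = l}
       = min0 {i \<in> {1..2^d}. c i = l}
     \<and> (\<lambda>d'::nat. real (card (Primes_ms (2^d') d')))
         \<in> O(\<lambda>d'. (log 2 (real (2^d')))^2 / log 2 (log 2 (real (2^d'))))
     \<and> (\<exists>K::real. \<forall>d'\<ge>2. \<forall>p\<in>Primes_ms (2^d') d'. real p \<le> K * (log 2 (real (2^d')))^2)
     \<and> (\<forall>p\<in>Primes_ms (2^d) d. \<forall>h\<in>{1..d}.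
          \<exists>a. \<forall>c' l'. (\<forall>i\<in>{1..2^d}. c' i < r) \<and> l' < r \<longrightarrow>
             b_vec d p c' l' h
               = poly_eval a ((2^d + 1) * nat \<lceil>log 2 (real r)\<rceil>)
                   (2 * nat \<lceil>log 2 (real r)\<rceil> * (p - 1)^2)
                   (input_bits (2^d) (nat \<lceil>log 2 (real r)\<rceil>) c' l') mod int p)
     \<and> (\<exists>K::real. \<forall>d'\<ge>2. \<forall>r'\<ge>2. \<forall>p\<in>Primes_ms (2^d') d'.
          real (2 * nat \<lceil>log 2 (real r')\<rceil> * (p - 1)^2)
            \<le> K * (log 2 (real (2^d')))^4 * log 2 (real r'))"
proof -
  have "\<forall>d'\<ge>2. \<forall>p\<in>Primes_ms (2^d') d'. real p \<le> 128 * (log 2 (real (2^d')))^2"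
  proof (intro allI impI ballI)
    fix d' p :: nat assume "2 \<le> d'" "p \<in> Primes_ms (2^d') d'"
    then have "real p \<le> real (128 * d'^2)" by (simp only: of_nat_le_iff Primes_ms_pow2_le)
    then show "real p \<le> 128 * (log 2 (real (2^d')))^2" by simp
  qed
  moreover have "\<forall>d'\<ge>2. \<forall>r'\<ge>2. \<forall>p\<in>Primes_ms (2^d') d'.
      real (2 * nat \<lceil>log 2 (real r')\<rceil> * (p - 1)^2) \<le> 65536 * (log 2 (real (2^d')))^4 * log 2 (real r')"
    using degree_bound by simp
  ultimately show ?thesis
    using min0_found_matches[OF assms(1)] card_Primes_ms_pow2_bigo
      b_vec_poly_mod[OF nat_ceiling_log2(1,2)[OF assms(2)]] by blast
qed

end
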